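(* Let $n$ be even, $F\colon\mathbb F_2^n\to\mathbb F_2^n$ a quadratic APN function, and $\mathcal V_F=\{V_b\colon b\in\mathbb F_2^n\setminus\{0\},\ \dim(V_b)\ge 1\}$. Then for every $b\in\mathbb F_2^n\setminus\{0\}$ the component $F_b$ has amplitude $2^{\frac{n+\dim(V_b)}{2}}$. In particular, if $F$ has amplitude distribution $[0^{k_0},2^{k_2},\dots,(n-2)^{k_{n-2}},n^{k_n}]$, then $\mathcal V_F$ is a vector space partition of $\mathbb F_2^n$ of type $[2^{k_2},\dots,(n-2)^{k_{n-2}},n^{k_n}]$.
   Context: $\langle\cdot,\cdot\rangle$ is the standard dot product. $F$ is APN if for every $a\neq0$ and every $c$, $F(x)+F(x+a)=c$ has at most 2 solutions; $F$ is quadratic if each component $F_b(x)=\langle b,F(x)\rangle$ is a quadratic form plus an affine function. Walsh transform: $W_F(b,a)=\sum_{x\in\mathbb F_2^n}(-1)^{F_b(x)+\langle x,a\rangle}$. For quadratic $F$ and fixed $b$ there is $0\le k\le n$ with $|W_F(b,a)|\in\{0,2^{(n+k)/2}\}$ for all $a$ (the nonzero value attained); $2^{(n+k)/2}$ is the amplitude of $F_b$. The amplitude distribution $[0^{k_0},1^{k_1},\dots,n^{k_n}]$ records that exactly $k_i$ nonzero $b$ give amplitude $2^{(n+i)/2}$. With $D_{F,a}(x)=F(x)+F(x+a)$, $H_b=\{x:\langle b,x\rangle=0\}$, $\overline{H_b}=\{x:\langle b,x\rangle=1\}$: $T_b=\{a:\mathrm{Im}(D_{F,a})=H_b\}\cup\{0\}$,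 $\overline{T_b}=\{a:\mathrm{Im}(D_{F,a})=\overline{H_b}\}$, $V_b=T_b\cup\overline{T_b}$ (a subspace). A vector space partition of $\mathbb F_2^n$ is a set of nonzero subspaces such that each nonzero vector lies in exactly one of them; it has type $[d_1^{n_1},\dots,d_k^{n_k}]$ ($d_1<\dots<d_k$) if it contains exactly $n_i$ subspaces of dimension $d_i$. *)

theory Defs
  imports "HOL-Analysis.Analysis" "HOL-Library.Z2"
begin

text \<open>The space F_2^n is modelled as bit ^ 'n, with n = CARD('n).
  Vector space notions (subspace, dim) are those of the library interpretation
  vec: vector_space (*s) over the field bit.\<close>

type_synonym 'n f2vec = "bit ^ 'n"

definition dotp :: "'n::finite f2vec \<Rightarrow> 'n f2vec \<Rightarrow> bit" where
  "dotp a x = (\<Sum>i\<in>UNIV. a $ i * x $ i)"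

definition component :: "('n::finite f2vec \<Rightarrow> 'n f2vec) \<Rightarrow> 'n f2vec \<Rightarrow> 'n f2vec \<Rightarrow> bit" where
  "component F b x = dotp b (F x)"

definition is_APN :: "('n::finite f2vec \<Rightarrow> 'n f2vec) \<Rightarrow> bool" where
  "is_APN F \<longleftrightarrow> (\<forall>a c. a \<noteq> 0 \<longrightarrow> card {x. F x + F (x + a) = c} \<le> 2)"

definition is_quadratic :: "('n::finite f2vec \<Rightarrow> 'n f2vec) \<Rightarrow> bool" where
  "is_quadratic F \<longleftrightarrow> (\<forall>b. \<exists>(q::'n \<Rightarrow> 'n \<Rightarrow> bit) (l::'n \<Rightarrow> bit) (e::bit).
      \<forall>x. component F b x = (\<Sum>i\<in>UNIV. \<Sum>j\<in>UNIV. q i j * x $ i * x $ j)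
                              + (\<Sum>i\<in>UNIV. l i * x $ i) + e)"

definition walsh :: "('n::finite f2vec \<Rightarrow> 'n f2vec) \<Rightarrow> 'n f2vec \<Rightarrow> 'n f2vec \<Rightarrow> int" where
  "walsh F b a = (\<Sum>x\<in>UNIV. (-1::int) ^ (of_bit (component F b x + dotp x a) :: nat))"

definition has_amplitude :: "('n::finite f2vec \<Rightarrow> 'n f2vec) \<Rightarrow> 'n f2vec \<Rightarrow> real \<Rightarrow> bool" where
  "has_amplitude F b A \<longleftrightarrow>
     (\<forall>a. \<bar>real_of_int (walsh F b a)\<bar> \<in> {0, A}) \<and> (\<exists>a. \<bar>real_of_int (walsh F b a)\<bar> = A)"

definition amp_count :: "('n::finite f2vec \<Rightarrow> 'n f2vec) \<Rightarrow> nat \<Rightarrow> nat" where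
  "amp_count F i = card {b. b \<noteq> 0 \<and> has_amplitude F b (2 powr ((real CARD('n) + real i) / 2))}"

definition derivative :: "('n::finite f2vec \<Rightarrow> 'n f2vec) \<Rightarrow> 'n f2vec \<Rightarrow> 'n f2vec \<Rightarrow> 'n f2vec" where
  "derivative F a x = F x + F (x + a)"

definition hyp :: "'n::finite f2vec \<Rightarrow> 'n f2vec set" where
  "hyp b = {x. dotp b x = 0}"

definition cohyp :: "'n::finite f2vec \<Rightarrow> 'n f2vec set" where
  "cohyp b = {x. dotp b x = 1}"

definition T_set :: "('n::finite f2vec \<Rightarrow> 'n f2vec) \<Rightarrow> 'n f2vec \<Rightarrow> 'n f2vec set" where
  "T_set F b = {a. range (derivative F a) = hyp b} \<union> {0}"

definition Tbar_set :: "('n::finite f2vec \<Rightarrow> 'n f2vec) \<Rightarrow> 'n f2vec \<Rightarrow> 'n f2vec set" where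
  "Tbar_set F b = {a. range (derivative F a) = cohyp b}"

definition V_set :: "('n::finite f2vec \<Rightarrow> 'n f2vec) \<Rightarrow> 'n f2vec \<Rightarrow> 'n f2vec set" where
  "V_set F b = T_set F b \<union> Tbar_set F b"

definition V_family :: "('n::finite f2vec \<Rightarrow> 'n f2vec) \<Rightarrow> 'n f2vec set set" where
  "V_family F = {V_set F b | b. b \<noteq> 0 \<and> vec.dim (V_set F b) \<ge> 1}"

definition is_vs_partition :: "'n::finite f2vec set set \<Rightarrow> bool" where
  "is_vs_partition P \<longleftrightarrow>
     (\<forall>V\<in>P. vec.subspace V \<and> V \<noteq> {0}) \<and>
     (\<forall>x. x \<noteq> 0 \<longrightarrow> (\<exists>!V. V \<in> P \<and> x \<in> V))"

end

theory Submission
  imports Defs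
begin

text \<open>
  For a component f = F_b of a quadratic F the polar form
  B(u, x) = f x + f (x + u) + f 0 + f u is bilinear. Squaring the Walsh transform
  therefore turns the inner sum into a character sum of the linear function B(u, -),
  which vanishes unless u lies in the radical of B; what remains is a character sum over
  the radical, so every nonzero value of W_F(b, -)^2 equals 2^n times the size of the
  radical, and by Parseval some value is nonzero. If F is APN, every derivative D_a F
  is two-to-one, so its image has 2^(n-1) points; for a in the radical the function
  <b, D_a F> is constant, so that image is a hyperplane or its complement, i.e. the
  radical of F_b is V_b. Finally x \<mapsto> D_a F x + D_a F 0 is linear with a two-element
  kernel, so its image is a hyperplane and exactly one nonzero b annihilates it: every
  nonzero a lies in exactly one V_b.
\<close>

declare add_bit_eq_xor[simp del] mult_bit_eq_and[simp del]

lemma UNIV_bit: "(UNIV::bit set) = {0, 1}"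
  by (auto intro: bit.exhaust)

instance bit :: finite
  by standard (simp only: UNIV_bit finite.emptyI finite.insertI)

lemma card_UNIV_bit: "CARD(bit) = 2"
  unfolding UNIV_bit by simp

lemma bit_add_self [simp]: "(x::bit) + x = 0"
  by (cases x) simp_all

lemma bit_add_eq_0_iff: "(s::bit) + t = 0 \<longleftrightarrow> s = t"
  by (cases s; cases t) simp_all

lemma f2vec_add_self [simp]: "(v::bit^'n) + v = 0"
  by (simp add: vec_eq_iff)

lemma f2vec_add_cancel_right [simp]: "(v::bit^'n) + w + w = v"
  by (simp add: add.assoc)

lemma f2vec_add_eq_0_iff: "(v::bit^'n) + w = 0 \<longleftrightarrow> v = w"
  by (metis f2vec_add_cancel_right add_0)

lemma f2vec_diff_eq_add: "(v::bit^'n) - w = v + w"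
  by (simp add: vec_eq_iff)

lemma inj_on_add_f2vec: "inj_on (\<lambda>v. v + w) (S :: ('n::finite f2vec) set)"
  by (rule inj_onI) (metis f2vec_add_cancel_right)

lemma bij_add_f2vec: "bij (\<lambda>v. v + (w :: 'n::finite f2vec))"
  by (rule bijI') (auto intro: exI[of _ "_ + w"])

definition chi :: "bit \<Rightarrow> int" where "chi t = (-1) ^ (of_bit t :: nat)"

lemma chi_0 [simp]: "chi 0 = 1" and chi_1 [simp]: "chi 1 = -1"
  by (simp_all add: chi_def)

lemma chi_add: "chi (s + t) = chi s * chi t"
  by (cases s; cases t) simp_all

lemma dotp_add_right: "dotp a (x + y) = dotp a x + dotp a y"
  by (simp add: dotp_def distrib_left sum.distrib)

lemma dotp_add_left: "dotp (a + b) x = dotp a x + dotp b x"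
  by (simp add: dotp_def distrib_right sum.distrib)

lemma dotp_comm: "dotp a x = dotp x a"
  by (simp add: dotp_def mult.commute)

lemma dotp_0_left [simp]: "dotp 0 x = 0" and dotp_0_right [simp]: "dotp x 0 = 0"
  by (simp_all add: dotp_def)

lemma dotp_axis: "dotp (axis i 1) v = v $ i"
proof -
  have "axis i 1 $ j * v $ j = (if j = i then v $ j else 0)" for j
    by (simp add: axis_def)
  then show ?thesis by (simp add: dotp_def)
qed

lemma dotp_eq_0_all_iff: "(\<forall>b. dotp b y = 0) \<longleftrightarrow> y = 0"
  by (metis dotp_0_right dotp_axis vec_eq_iff zero_index)

lemma sum_chi_additive:
  fixes S :: "('n::finite f2vec) set" and h :: "'n f2vec \<Rightarrow> bit"
  assumes closed: "\<And>u v. u \<in> S \<Longrightarrow> v \<in> S \<Longrightarrow> u + v \<in> S"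
    and additive: "\<And>u v. u \<in> S \<Longrightarrow> v \<in> S \<Longrightarrow> h (u + v) = h u + h v"
  shows "(\<Sum>u\<in>S. chi (h u)) = (if \<forall>u\<in>S. h u = 0 then int (card S) else 0)"
proof (cases "\<forall>u\<in>S. h u = 0")
  case False
  then obtain e where e: "e \<in> S" "h e = 1" by auto
  have "(\<lambda>u. u + e) ` S = S"
    using closed e by (auto intro!: image_eqI[of _ _ "_ + e"])
  then have "(\<Sum>u\<in>S. chi (h u)) = (\<Sum>u\<in>S. chi (h (u + e)))"
    using sum.reindex[OF inj_on_add_f2vec, of "\<lambda>u. chi (h u)" e S] by simp
  also have "\<dots> = - (\<Sum>u\<in>S. chi (h u))"
    by (simp add: sum_negf[symmetric] additive e chi_add)
  finally have "(\<Sum>u\<in>S. chi (h u)) = 0" by simp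
  then show ?thesis by (simp only: if_not_P[OF False])
qed simp

lemma sum_chi_additive_UNIV:
  fixes h :: "('n::finite f2vec) \<Rightarrow> bit"
  assumes "\<And>u v. h (u + v) = h u + h v"
  shows "(\<Sum>u\<in>UNIV. chi (h u)) = (if \<forall>u. h u = 0 then 2 ^ CARD('n) else 0)"
  using sum_chi_additive[of UNIV h] assms by (simp add: card_UNIV_bit)

lemma sum_chi_dotp:
  "(\<Sum>b\<in>UNIV. chi (dotp b (y::'n::finite f2vec))) = (if y = 0 then 2 ^ CARD('n) else 0)"
  using sum_chi_additive_UNIV[of "\<lambda>b. dotp b y"] dotp_eq_0_all_iff[of y]
  by (simp add: dotp_add_left)

lemma ex_bit_iff: "(\<exists>k::bit. P k) \<longleftrightarrow> P 0 \<or> P 1"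
  by (metis bit.exhaust)

lemma span_insert_f2vec:
  "vec.span (insert x B) = vec.span B \<union> (\<lambda>v. v + x) ` vec.span (B :: ('n::finite f2vec) set)"
proof -
  have "vec.span (insert x B) = {y. \<exists>k. y - k *s x \<in> vec.span B}"
    by (rule vec.span_insert)
  also have "\<dots> = {y. y \<in> vec.span B \<or> y + x \<in> vec.span B}"
    by (simp add: ex_bit_iff f2vec_diff_eq_add)
  also have "\<dots> = vec.span B \<union> (\<lambda>v. v + x) ` vec.span B"
    by (auto intro: image_eqI[of _ _ "_ + x"])
  finally show ?thesis .
qed

lemma card_span_independent:
  fixes B :: "('n::finite f2vec) set"
  assumes "finite B" "vec.independent B"
  shows "card (vec.span B) = 2 ^ card B"
  using assms
proof (induction B rule: finite_induct)
  case (insert x B)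
  then have indep: "vec.independent B" and x: "x \<notin> vec.span B"
    by (auto simp: vec.independent_insert)
  have "vec.span B \<inter> (\<lambda>v. v + x) ` vec.span B = {}"
    using x by (auto, metis add.commute f2vec_add_cancel_right vec.span_add)
  then have "card (vec.span (insert x B)) = card (vec.span B) + card ((\<lambda>v. v + x) ` vec.span B)"
    by (simp add: span_insert_f2vec card_Un_disjoint)
  also have "\<dots> = 2 * card (vec.span B)"
    by (simp add: card_image[OF inj_on_add_f2vec])
  finally show ?case using insert.IH[OF indep] insert.hyps by simp
qed simp

lemma card_subspace:
  fixes S :: "('n::finite f2vec) set"
  assumes "vec.subspace S"
  shows "card S = 2 ^ vec.dim S"
  by (metis assms card_span_independent vec.basis_subspace_exists)

lemma card_dotp_level_set:
  fixes b :: "'n::finite f2vec"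
  assumes "b \<noteq> 0"
  shows "2 * card {x. dotp b x = c} = 2 ^ CARD('n)"
proof -
  obtain e where e: "dotp b e = 1"
    using assms dotp_eq_0_all_iff[of b] by (auto simp: dotp_comm)
  have "(\<lambda>x. x + e) ` {x. dotp b x = c} = {x. dotp b x = c + 1}"
    using e by (auto simp: dotp_add_right intro!: image_eqI[of _ _ "_ + e"])
  then have "card {x. dotp b x = c + 1} = card {x. dotp b x = c}"
    by (metis card_image inj_on_add_f2vec)
  moreover have "{x. dotp b x = c} \<union> {x. dotp b x = c + 1} = UNIV"
    by (cases c) auto
  moreover have "{x. dotp b x = c} \<inter> {x. dotp b x = c + 1} = {}"
    by (cases c) auto
  ultimately have "card {x. dotp b x = c} + card {x. dotp b x = c + 1} = CARD('n f2vec)"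
    by (metis card_Un_disjoint finite)
  then show ?thesis
    using \<open>card {x. dotp b x = c + 1} = card {x. dotp b x = c}\<close> by (simp add: card_UNIV_bit mult_2)
qed

definition polar_form :: "('n::finite f2vec \<Rightarrow> 'a::ab_group_add) \<Rightarrow> 'n f2vec \<Rightarrow> 'n f2vec \<Rightarrow> 'a"
  where "polar_form f u x = f x + f (x + u) + f 0 + f u"

definition polar_radical :: "('n::finite f2vec \<Rightarrow> bit) \<Rightarrow> 'n f2vec set"
  where "polar_radical f = {u. \<forall>x. polar_form f u x = 0}"

lemma quadratic_component_add3:
  assumes "is_quadratic F"
  shows "component F b (x + y + u) = component F b (x + y) + component F b (x + u)
     + component F b (y + u) + component F b x + component F b y + component F b u + component F b 0"
proof -
  obtain q l e where qle: "\<And>x. component F b x = (\<Sum>i\<in>UNIV. \<Sum>j\<in>UNIV. q i j * x $ i * x $ j)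
                              + (\<Sum>i\<in>UNIV. l i * x $ i) + e"
    using assms unfolding is_quadratic_def by blast
  define Q where "Q v = (\<Sum>i\<in>UNIV. \<Sum>j\<in>UNIV. q i j * v $ i * v $ j)" for v :: "bit^'a"
  define L where "L v = (\<Sum>i\<in>UNIV. l i * v $ i)" for v :: "bit^'a"
  have quadratic_term: "(c::bit) * (a+b+d) * (a'+b'+d') = c*(a+b)*(a'+b') + c*(a+d)*(a'+d')
      + c*(b+d)*(b'+d') + c*a*a' + c*b*b' + c*d*d'" for c a b d a' b' d'
    by (cases c; cases a; cases b; cases d; cases a'; cases b'; cases d') simp_all
  have linear_term: "(c::bit) * (a+b+d) = c*(a+b) + c*(a+d) + c*(b+d) + c*a + c*b + c*d"
    for c a b d
    by (cases c; cases a; cases b; cases d) simp_all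
  have "Q (x+y+u) = Q (x+y) + Q (x+u) + Q (y+u) + Q x + Q y + Q u"
    unfolding Q_def by (simp add: quadratic_term sum.distrib)
  moreover have "L (x+y+u) = L (x+y) + L (x+u) + L (y+u) + L x + L y + L u"
    unfolding L_def by (simp add: linear_term sum.distrib)
  moreover have "Q 0 = 0" "L 0 = 0"
    unfolding Q_def L_def by simp_all
  moreover have "component F b v = Q v + L v + e" for v
    using qle Q_def L_def by simp
  ultimately show ?thesis by (simp add: ac_simps)
qed

lemma polar_form_component_add_right:
  assumes "is_quadratic F"
  shows "polar_form (component F b) u (x + y)
    = polar_form (component F b) u x + polar_form (component F b) u y"
  unfolding polar_form_def quadratic_component_add3[OF assms] by (simp add: ac_simps)

lemma dotp_polar_form: "dotp b (polar_form F u x) = polar_form (component F b) u x"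
  by (simp add: polar_form_def component_def dotp_add_right)

lemma polar_form_add_right:
  assumes "is_quadratic F"
  shows "polar_form F u (x + y) = polar_form F u x + polar_form F u y"
proof -
  have "dotp (axis i 1) (polar_form F u (x + y)) = dotp (axis i 1) (polar_form F u x + polar_form F u y)"
    for i
    by (simp add: dotp_polar_form dotp_add_right polar_form_component_add_right[OF assms])
  then show ?thesis by (simp add: dotp_axis vec_eq_iff)
qed

lemma polar_form_add_left:
  "polar_form (f :: 'n::finite f2vec \<Rightarrow> bit) (u + v) x
    = polar_form f u x + polar_form f v (x + u) + polar_form f v u"
  by (simp add: polar_form_def ac_simps)

lemma polar_radical_subspace: "vec.subspace (polar_radical f)"
  unfolding vec.subspace_def
proof (intro conjI ballI allI)
  show "0 \<in> polar_radical f" by (simp add: polar_radical_def polar_form_def)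
  then show "c *s u \<in> polar_radical f" if "u \<in> polar_radical f" for c :: bit and u
    using that by (cases c) simp_all
  show "u + v \<in> polar_radical f" if "u \<in> polar_radical f" "v \<in> polar_radical f" for u v
    using that by (simp add: polar_radical_def polar_form_add_left)
qed

lemma polar_radical_additive:
  assumes "v \<in> polar_radical f"
  shows "f (u + v) + f 0 = (f u + f 0) + (f v + f 0)"
proof -
  have "polar_form f v u = 0" using assms by (simp add: polar_radical_def)
  then have "(f (u + v) + f 0) + (f u + f v) = 0" by (simp add: polar_form_def ac_simps)
  then show ?thesis by (simp add: bit_add_eq_0_iff ac_simps)
qed

lemma walsh_eq_sum_chi: "walsh F b a = (\<Sum>x\<in>UNIV. chi (component F b x + dotp x a))"
  by (simp add: walsh_def chi_def)

lemma sum_UNIV_translate: "(\<Sum>y\<in>UNIV. g y) = (\<Sum>u\<in>UNIV. g (x + u))"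
  for x :: "'n::finite f2vec"
  using sum.reindex_bij_betw[OF bij_add_f2vec, of g x] by (simp add: add.commute)

lemma parseval_walsh:
  fixes F :: "'n::finite f2vec \<Rightarrow> 'n f2vec"
  shows "(\<Sum>a\<in>UNIV. (walsh F b a)^2) = 2 ^ CARD('n) * 2 ^ CARD('n)"
proof -
  let ?f = "component F b" and ?N = "2 ^ CARD('n) :: int"
  have product_term: "chi (?f x + dotp x a) * chi (?f y + dotp y a)
      = chi (?f x + ?f y) * chi (dotp a (x + y))" for a x y
    by (simp add: chi_add dotp_add_right dotp_comm ac_simps)
  have "(\<Sum>a\<in>UNIV. (walsh F b a)^2)
      = (\<Sum>a\<in>UNIV. \<Sum>x\<in>UNIV. \<Sum>y\<in>UNIV. chi (?f x + ?f y) * chi (dotp a (x + y)))"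
    by (simp only: walsh_eq_sum_chi power2_eq_square sum_product product_term)
  also have "\<dots> = (\<Sum>x\<in>UNIV. \<Sum>y\<in>UNIV. chi (?f x + ?f y) * (\<Sum>a\<in>UNIV. chi (dotp a (x + y))))"
    by (simp only: sum_distrib_left, rule trans[OF sum.swap], rule sum.cong[OF refl], rule sum.swap)
  also have "\<dots> = (\<Sum>x\<in>(UNIV :: 'n f2vec set). \<Sum>y\<in>UNIV. if y = x then ?N else 0)"
    by (intro sum.cong refl) (auto simp: sum_chi_dotp f2vec_add_eq_0_iff)
  finally show ?thesis by (simp add: card_UNIV_bit)
qed

lemma walsh_square:
  fixes F :: "'n::finite f2vec \<Rightarrow> 'n f2vec"
  assumes "is_quadratic F"
  shows "(walsh F b a)^2 = 2 ^ CARD('n) *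
    (\<Sum>u\<in>polar_radical (component F b). chi (dotp u a + component F b 0 + component F b u))"
proof -
  let ?f = "component F b" and ?N = "2 ^ CARD('n) :: int"
  let ?h = "\<lambda>u. dotp u a + ?f 0 + ?f u"
  have polar_sum: "(\<Sum>x\<in>UNIV. chi (polar_form ?f u x)) = (if u \<in> polar_radical ?f then ?N else 0)"
    for u
    using sum_chi_additive_UNIV[of "polar_form ?f u"] polar_form_component_add_right[OF assms]
    by (simp add: polar_radical_def)
  have split: "chi (?f x + dotp x a) * chi (?f (x + u) + dotp (x + u) a)
      = chi (?h u) * chi (polar_form ?f u x)" for x u
    by (simp add: chi_add[symmetric] polar_form_def dotp_add_left ac_simps)
  have "(walsh F b a)^2 = (\<Sum>x\<in>UNIV. \<Sum>y\<in>UNIV. chi (?f x + dotp x a) * chi (?f y + dotp y a))"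
    by (simp add: walsh_eq_sum_chi power2_eq_square sum_product)
  also have "\<dots> = (\<Sum>x\<in>UNIV. \<Sum>u\<in>UNIV. chi (?f x + dotp x a) * chi (?f (x + u) + dotp (x + u) a))"
    by (rule sum.cong[OF refl], rule sum_UNIV_translate)
  also have "\<dots> = (\<Sum>u\<in>UNIV. chi (?h u) * (\<Sum>x\<in>UNIV. chi (polar_form ?f u x)))"
    by (subst sum.swap) (simp add: split sum_distrib_left)
  also have "\<dots> = (\<Sum>u\<in>UNIV. if u \<in> polar_radical ?f then ?N * chi (?h u) else 0)"
    by (intro sum.cong) (simp_all add: polar_sum)
  also have "\<dots> = (\<Sum>u\<in>polar_radical ?f. ?N * chi (?h u))"
    by (simp add: sum.inter_filter[symmetric])
  finally show ?thesis by (simp add: sum_distrib_left)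
qed

lemma walsh_zero_or_square:
  fixes F :: "'n::finite f2vec \<Rightarrow> 'n f2vec"
  assumes "is_quadratic F"
  shows "walsh F b a = 0 \<or> (walsh F b a)^2 = 2 ^ (CARD('n) + vec.dim (polar_radical (component F b)))"
proof -
  let ?f = "component F b"
  let ?h = "\<lambda>u. dotp u a + ?f 0 + ?f u"
  have "?h (u + v) = ?h u + ?h v" if "v \<in> polar_radical ?f" for u v
    using polar_radical_additive[OF that, of u] by (simp add: dotp_add_left ac_simps)
  then have "(\<Sum>u\<in>polar_radical ?f. chi (?h u))
      = (if \<forall>u\<in>polar_radical ?f. ?h u = 0 then int (card (polar_radical ?f)) else 0)"
    by (intro sum_chi_additive vec.subspace_add[OF polar_radical_subspace])
  also have "int (card (polar_radical ?f)) = 2 ^ vec.dim (polar_radical ?f)"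
    by (simp add: card_subspace[OF polar_radical_subspace])
  finally have "(\<Sum>u\<in>polar_radical ?f. chi (?h u)) \<in> {0, 2 ^ vec.dim (polar_radical ?f)}"
    by simp
  then show ?thesis
    using walsh_square[OF assms, of b a] by (auto simp: power_add)
qed

lemma abs_eq_two_powr_half:
  fixes w :: int
  assumes "w^2 = 2^m"
  shows "\<bar>real_of_int w\<bar> = 2 powr (real m / 2)"
proof -
  have "\<bar>real_of_int w\<bar> = sqrt (2 ^ m)"
    by (metis assms real_sqrt_abs of_int_power of_int_numeral)
  also have "\<dots> = 2 powr (real m / 2)"
    by (simp add: powr_half_sqrt[symmetric] powr_realpow[symmetric] powr_powr)
  finally show ?thesis .
qed

lemma has_amplitude_polar_radical:
  fixes F :: "'n::finite f2vec \<Rightarrow> 'n f2vec"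
  assumes "is_quadratic F"
  shows "has_amplitude F b (2 powr ((real CARD('n) + real (vec.dim (polar_radical (component F b)))) / 2))"
    (is "has_amplitude F b ?A")
proof -
  have walsh_values: "walsh F b a = 0 \<or> \<bar>real_of_int (walsh F b a)\<bar> = ?A" for a
    using walsh_zero_or_square[OF assms, of b a] abs_eq_two_powr_half by fastforce
  obtain a0 where "walsh F b a0 \<noteq> 0"
    using parseval_walsh[of F b] by fastforce
  show ?thesis unfolding has_amplitude_def
  proof (intro conjI allI exI)
    show "\<bar>real_of_int (walsh F b a)\<bar> \<in> {0, ?A}" for a
      using walsh_values[of a] by auto
    show "\<bar>real_of_int (walsh F b a0)\<bar> = ?A"
      using walsh_values[of a0] \<open>walsh F b a0 \<noteq> 0\<close> by auto
  qed
qed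

lemma has_amplitude_unique: "has_amplitude F b A \<Longrightarrow> has_amplitude F b A' \<Longrightarrow> A = A'"
  unfolding has_amplitude_def by (metis insert_iff singletonD)

lemma derivative_self_add: "derivative F a (x + a) = derivative F a x"
  unfolding derivative_def f2vec_add_cancel_right by (rule add.commute)

lemma card_derivative_fiber:
  fixes F :: "'n::finite f2vec \<Rightarrow> 'n f2vec"
  assumes "is_APN F" and "a \<noteq> 0"
  shows "card {x. derivative F a x = derivative F a x0} = 2"
proof -
  have "card {x. derivative F a x = derivative F a x0} \<le> 2"
    using assms unfolding is_APN_def derivative_def by blast
  moreover have "{x0, x0 + a} \<subseteq> {x. derivative F a x = derivative F a x0}"
    by (simp add: derivative_self_add)
  then have "card {x0, x0 + a} \<le> card {x. derivative F a x = derivative F a x0}"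
    by (intro card_mono) simp_all
  then have "2 \<le> card {x. derivative F a x = derivative F a x0}"
    using \<open>a \<noteq> 0\<close> by simp
  ultimately show ?thesis by simp
qed

lemma card_range_derivative:
  fixes F :: "'n::finite f2vec \<Rightarrow> 'n f2vec"
  assumes "is_APN F" and "a \<noteq> 0"
  shows "2 * card (range (derivative F a)) = 2 ^ CARD('n)"
proof -
  have fibers: "UNIV = (\<Union>y\<in>range (derivative F a). {x. derivative F a x = y})" by auto
  have "CARD('n f2vec) = (\<Sum>y\<in>range (derivative F a). card {x. derivative F a x = y})"
    by (subst fibers, rule card_UN_disjoint) auto
  also have "\<dots> = (\<Sum>y\<in>range (derivative F a). 2)"
    using card_derivative_fiber[OF assms] by (intro sum.cong) auto
  finally show ?thesis by (simp add: card_UNIV_bit)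
qed

lemma polar_form_eq_derivative: "polar_form F a x = derivative F a x + derivative F a 0"
  by (simp add: polar_form_def derivative_def add.assoc)

lemma mem_polar_radical_iff:
  "a \<in> polar_radical (component F b)
    \<longleftrightarrow> (\<forall>x. dotp b (derivative F a x) = dotp b (derivative F a 0))"
  by (simp add: polar_radical_def dotp_polar_form[symmetric] polar_form_eq_derivative
      dotp_add_right bit_add_eq_0_iff)

lemma V_set_eq_polar_radical:
  fixes F :: "'n::finite f2vec \<Rightarrow> 'n f2vec"
  assumes "is_APN F" and "b \<noteq> 0"
  shows "V_set F b = polar_radical (component F b)"
proof (intro set_eqI iffI)
  fix a assume "a \<in> V_set F b"
  then have "a = 0 \<or> (\<exists>c. range (derivative F a) = {y. dotp b y = c})"
    by (auto simp: V_set_def T_set_def Tbar_set_def hyp_def cohyp_def)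
  then show "a \<in> polar_radical (component F b)"
    by (metis (mono_tags) mem_polar_radical_iff mem_Collect_eq rangeI
        vec.subspace_0[OF polar_radical_subspace])
next
  fix a assume a: "a \<in> polar_radical (component F b)"
  show "a \<in> V_set F b"
  proof (cases "a = 0")
    case False
    let ?c = "dotp b (derivative F a 0)"
    have "range (derivative F a) \<subseteq> {y. dotp b y = ?c}"
      using a by (auto simp: mem_polar_radical_iff)
    moreover have "card (range (derivative F a)) = card {y. dotp b y = ?c}"
      using card_range_derivative[OF assms(1) False] card_dotp_level_set[OF assms(2), of ?c]
      by linarith
    ultimately have "range (derivative F a) = {y. dotp b y = ?c}"
      by (simp add: card_subset_eq)
    then show ?thesis
      by (cases ?c) (simp_all add: V_set_def T_set_def Tbar_set_def hyp_def cohyp_def)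
  qed (simp add: V_set_def T_set_def)
qed

lemma polar_radical_component_0: "polar_radical (component F 0) = UNIV"
  by (simp add: polar_radical_def polar_form_def component_def)

lemma card_polar_radicals_containing:
  fixes F :: "'n::finite f2vec \<Rightarrow> 'n f2vec"
  assumes "is_quadratic F" and "is_APN F" and "a \<noteq> 0"
  shows "card {b. a \<in> polar_radical (component F b)} = 2"
proof -
  let ?N = "2 ^ CARD('n) :: int" and ?L = "polar_form F a"
  have mem_iff: "a \<in> polar_radical (component F b) \<longleftrightarrow> (\<forall>x. dotp b (?L x) = 0)" for b
    by (simp add: polar_radical_def dotp_polar_form)
  have "(\<Sum>x\<in>UNIV. chi (dotp b (?L x))) = (if a \<in> polar_radical (component F b) then ?N else 0)"
    for b
    using sum_chi_additive_UNIV[of "\<lambda>x. dotp b (?L x)"] polar_form_add_right[OF assms(1)]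
    by (simp add: mem_iff dotp_add_right)
  then have "?N * int (card {b. a \<in> polar_radical (component F b)})
      = (\<Sum>b\<in>UNIV. \<Sum>x\<in>UNIV. chi (dotp b (?L x)))"
    by (simp add: sum.If_cases)
  also have "\<dots> = (\<Sum>x\<in>UNIV. \<Sum>b\<in>UNIV. chi (dotp b (?L x)))"
    by (rule sum.swap)
  also have "\<dots> = ?N * int (card {x. ?L x = 0})"
    by (simp add: sum_chi_dotp sum.If_cases)
  also have "{x. ?L x = 0} = {x. derivative F a x = derivative F a 0}"
    by (simp add: polar_form_eq_derivative f2vec_add_eq_0_iff)
  finally show ?thesis
    using card_derivative_fiber[OF assms(2,3)] by simp
qed

lemma ex1_nonzero_polar_radical:
  fixes F :: "'n::finite f2vec \<Rightarrow> 'n f2vec"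
  assumes "is_quadratic F" and "is_APN F" and "a \<noteq> 0"
  shows "\<exists>!b. b \<noteq> 0 \<and> a \<in> polar_radical (component F b)"
proof -
  obtain b b' where "{b. a \<in> polar_radical (component F b)} = {b, b'}" "b \<noteq> b'"
    using card_polar_radicals_containing[OF assms] by (auto simp: card_2_iff)
  then have mem_iff: "a \<in> polar_radical (component F c) \<longleftrightarrow> c = b \<or> c = b'" for c
    by (simp add: set_eq_iff)
  have "b = 0 \<or> b' = 0"
    using mem_iff[of 0] by (simp add: polar_radical_component_0)
  then show ?thesis
  proof
    assume "b = 0"
    then show ?thesis using mem_iff \<open>b \<noteq> b'\<close> by (intro ex1I[of _ b']) auto
  next
    assume "b' = 0"
    then show ?thesis using mem_iff \<open>b \<noteq> b'\<close> by (intro ex1I[of _ b]) auto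
  qed
qed

lemma dim_ge_1_iff: "1 \<le> vec.dim S \<longleftrightarrow> (\<exists>x\<in>S. x \<noteq> 0)"
proof -
  have "1 \<le> vec.dim S \<longleftrightarrow> \<not> vec.dim S = 0" by linarith
  also have "\<dots> \<longleftrightarrow> \<not> S \<subseteq> {0}" by (simp only: vec.dim_eq_0)
  finally show ?thesis by blast
qed

lemma V_set_subspace:
  assumes "is_APN F" and "b \<noteq> 0"
  shows "vec.subspace (V_set F b)"
  using V_set_eq_polar_radical[OF assms] polar_radical_subspace by simp

lemma has_amplitude_V_set:
  fixes F :: "'n::finite f2vec \<Rightarrow> 'n f2vec"
  assumes "is_quadratic F" and "is_APN F" and "b \<noteq> 0"
  shows "has_amplitude F b (2 powr ((real CARD('n) + real (vec.dim (V_set F b))) / 2))"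
  using has_amplitude_polar_radical[OF assms(1)] V_set_eq_polar_radical[OF assms(2,3)] by simp

lemma ex1_nonzero_V_set:
  fixes F :: "'n::finite f2vec \<Rightarrow> 'n f2vec"
  assumes "is_quadratic F" and "is_APN F" and "a \<noteq> 0"
  shows "\<exists>!b. b \<noteq> 0 \<and> a \<in> V_set F b"
proof -
  have "b \<noteq> 0 \<and> a \<in> V_set F b \<longleftrightarrow> b \<noteq> 0 \<and> a \<in> polar_radical (component F b)" for b
    using V_set_eq_polar_radical[OF assms(2)] by auto
  then show ?thesis
    using ex1_nonzero_polar_radical[OF assms] by simp
qed

lemma is_vs_partition_V_family:
  fixes F :: "'n::finite f2vec \<Rightarrow> 'n f2vec"
  assumes "is_quadratic F" and "is_APN F"
  shows "is_vs_partition (V_family F)"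
  unfolding is_vs_partition_def
proof (intro conjI ballI allI impI)
  fix V assume "V \<in> V_family F"
  then obtain b where "V = V_set F b" and "b \<noteq> 0" and "1 \<le> vec.dim V"
    by (auto simp: V_family_def)
  then show "vec.subspace V"
    using V_set_subspace[OF assms(2)] by simp
  show "V \<noteq> {0}"
    using \<open>1 \<le> vec.dim V\<close> dim_ge_1_iff by force
next
  fix x :: "'n f2vec" assume "x \<noteq> 0"
  obtain b where b: "b \<noteq> 0 \<and> x \<in> V_set F b"
    and unique: "\<forall>b'. b' \<noteq> 0 \<and> x \<in> V_set F b' \<longrightarrow> b' = b"
    using ex1_nonzero_V_set[OF assms \<open>x \<noteq> 0\<close>] by (rule ex1E)
  show "\<exists>!V. V \<in> V_family F \<and> x \<in> V"
  proof (rule ex1I[of _ "V_set F b"])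
    have "1 \<le> vec.dim (V_set F b)"
      using b \<open>x \<noteq> 0\<close> dim_ge_1_iff by blast
    then show "V_set F b \<in> V_family F \<and> x \<in> V_set F b"
      using b by (auto simp: V_family_def)
  next
    fix V assume V: "V \<in> V_family F \<and> x \<in> V"
    then obtain b' where "V = V_set F b'" "b' \<noteq> 0"
      by (auto simp: V_family_def)
    then show "V = V_set F b"
      using V unique by blast
  qed
qed

lemma amp_count_eq_card_dim_V_set:
  fixes F :: "'n::finite f2vec \<Rightarrow> 'n f2vec"
  assumes "is_quadratic F" and "is_APN F"
  shows "amp_count F d = card {b. b \<noteq> 0 \<and> vec.dim (V_set F b) = d}"
proof -
  have "has_amplitude F b (2 powr ((real CARD('n) + real d) / 2)) \<longleftrightarrow> vec.dim (V_set F b) = d"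
    if "b \<noteq> 0" for b
  proof
    assume "has_amplitude F b (2 powr ((real CARD('n) + real d) / 2))"
    then have "2 powr ((real CARD('n) + real d) / 2)
        = 2 powr ((real CARD('n) + real (vec.dim (V_set F b))) / 2)"
      using has_amplitude_unique has_amplitude_V_set[OF assms that] by blast
    then show "vec.dim (V_set F b) = d" by (simp add: powr_inj)
  qed (use has_amplitude_V_set[OF assms that] in simp)
  then show ?thesis
    unfolding amp_count_def by (intro arg_cong[where f = card]) auto
qed

lemma card_V_family_dim:
  fixes F :: "'n::finite f2vec \<Rightarrow> 'n f2vec"
  assumes "is_quadratic F" and "is_APN F" and "1 \<le> d"
  shows "card {V \<in> V_family F. vec.dim V = d} = amp_count F d"
proof -
  let ?B = "{b. b \<noteq> 0 \<and> vec.dim (V_set F b) = d}"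
  have "{V \<in> V_family F. vec.dim V = d} = V_set F ` ?B"
    using \<open>1 \<le> d\<close> by (auto simp: V_family_def)
  moreover have "inj_on (V_set F) ?B"
  proof (rule inj_onI)
    fix b b' assume "b \<in> ?B" "b' \<in> ?B" "V_set F b = V_set F b'"
    moreover obtain x where "x \<in> V_set F b" "x \<noteq> 0"
      using \<open>b \<in> ?B\<close> \<open>1 \<le> d\<close> dim_ge_1_iff by auto
    ultimately show "b = b'"
      using ex1_nonzero_V_set[OF assms(1,2), of x] by auto
  qed
  ultimately show ?thesis
    by (simp add: card_image amp_count_eq_card_dim_V_set[OF assms(1,2)])
qed

theorem mainTheorem2:
  fixes F :: "'n::finite f2vec \<Rightarrow> 'n f2vec"
  assumes "even CARD('n)"
    and "is_quadratic F"
    and "is_APN F"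
  shows "(\<forall>b. b \<noteq> 0 \<longrightarrow>
            has_amplitude F b (2 powr ((real CARD('n) + real (vec.dim (V_set F b))) / 2)))
       \<and> ((\<forall>i. odd i \<longrightarrow> amp_count F i = 0) \<longrightarrow>
            is_vs_partition (V_family F) \<and>
            (\<forall>d. d \<ge> 1 \<longrightarrow> card {V \<in> V_family F. vec.dim V = d} = amp_count F d))"
  using has_amplitude_V_set[OF assms(2,3)] is_vs_partition_V_family[OF assms(2,3)]
    card_V_family_dim[OF assms(2,3)] by blast

end
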